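(* Consider $K$-class classification with the uniform off-diagonal noise model described in the context. Then for every classifier $h$ and every $g:\{1,\dots,K\}^2\to\mathrm{dom}(f^* )$, $$\widetilde d_f(h,g)=\Big(1-\sum_{j=1}^K e_j\Big)\,d_f(h,g)+\sum_{j=1}^K e_j\,\Delta^j_f(h,g).$$
   Context: $(X,Y)$ is a random pair with $X\in\mathcal X$ and $Y\in\{1,\dots,K\}$. A noisy label $\tilde Y\in\{1,\dots,K\}$ is generated from $Y$, conditionally independently of $X$ given $Y$, via the transition matrix $T_{i,j}={\mathbb P}(\tilde Y=j\mid Y=i)$. Uniform off-diagonal model: there are $e_1,\dots,e_K\ge0$ with $\sum_j e_j<1$ such that $T_{i,j}=e_j$ for all $i\ne j$ and $T_{i,i}=1-\sum_{j\ne i}e_j$. A classifier is a measurable $h:\mathcal X\to\{1,\dots,K\}$. $P$ is the joint law of $(h(X),Y)$, $Q$ the product of its marginals ${\mathbb P}(h(X)=y){\mathbb P}(Y=y')$, and $\tilde P,\tilde Q$ the same with $\tilde Y$. $f$ is convex with $f(1)=0$, $f^*(u)=\sup_v\{uv-f(v)\}$. $d_f(h,g)=\mathbb E_{Z\sim P}[g(Z)]-\mathbb E_{Z\sim Q}[f^*(g(Z))]$, $\widetilde d_f(h,g)=\mathbb E_{Z\sim \tilde P}[g(Z)]-\mathbb E_{Z\sim \tilde Q}[f^*(g(Z))]$, and for a class $j$, $\Delta^j_f(h,g)=\mathbb E_X[g(h(X),j)]-\mathbb E_X[f^*(g(h(X),j))]$. *)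

theory Defs
  imports "HOL-Probability.Probability"
begin

definition fconj :: "real set \<Rightarrow> (real \<Rightarrow> real) \<Rightarrow> real \<Rightarrow> real" where
  "fconj D f u = (SUP v\<in>D. u * v - f v)"

definition fconj_dom :: "real set \<Rightarrow> (real \<Rightarrow> real) \<Rightarrow> real set" where
  "fconj_dom D f = {u. bdd_above ((\<lambda>v. u * v - f v) ` D)}"

(* d_f(h,g) w.r.t. a label variable L (L = Y gives d_f, L = Y~ gives d~_f):
   E_{Z ~ P}[g Z] - E_{Z ~ Q}[f*(g Z)], P the joint law of (h(X),L),
   Q the product of its marginals. *)
definition dfL :: "'w measure \<Rightarrow> ('w \<Rightarrow> 'x) \<Rightarrow> ('w \<Rightarrow> nat) \<Rightarrow> ('x \<Rightarrow> nat)
    \<Rightarrow> (nat \<Rightarrow> nat \<Rightarrow> real) \<Rightarrow> real set \<Rightarrow> (real \<Rightarrow> real) \<Rightarrow> real" where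
  "dfL M X L h g D f =
     integral\<^sup>L (distr M (count_space UNIV \<Otimes>\<^sub>M count_space UNIV) (\<lambda>\<omega>. (h (X \<omega>), L \<omega>)))
        (\<lambda>(a, b). g a b)
   - integral\<^sup>L (distr M (count_space UNIV) (\<lambda>\<omega>. h (X \<omega>)) \<Otimes>\<^sub>M distr M (count_space UNIV) L)
        (\<lambda>(a, b). fconj D f (g a b))"

definition DeltaF :: "'w measure \<Rightarrow> ('w \<Rightarrow> 'x) \<Rightarrow> ('x \<Rightarrow> nat)
    \<Rightarrow> (nat \<Rightarrow> nat \<Rightarrow> real) \<Rightarrow> real set \<Rightarrow> (real \<Rightarrow> real) \<Rightarrow> nat \<Rightarrow> real" where
  "DeltaF M X h g D f j =
     integral\<^sup>L M (\<lambda>\<omega>. g (h (X \<omega>)) j) - integral\<^sup>L M (\<lambda>\<omega>. fconj D f (g (h (X \<omega>)) j))"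

definition Tunif :: "nat \<Rightarrow> (nat \<Rightarrow> real) \<Rightarrow> nat \<Rightarrow> nat \<Rightarrow> real" where
  "Tunif K e i j = (if i = j then 1 - (\<Sum>j'\<in>{1..K} - {i}. e j') else e j)"

end

theory Submission
  imports Defs
begin

text \<open>Write \<open>c = 1 - (\<Sum>j. e j)\<close> and \<open>q\<close> for the law of \<open>h(X)\<close>. Conditioning on the clean
label \<open>Y\<close>, the uniform off-diagonal transition gives, for every event \<open>A\<close> of \<open>X\<close>,
\<open>P(X \<in> A, Yt = b) = c P(X \<in> A, Y = b) + e b P(X \<in> A)\<close>. Taking \<open>A = h\<^sup>-\<^sup>1{a}\<close> and \<open>A\<close> the
whole space shows that the noisy joint law of \<open>(h(X), Yt)\<close> and the product of its marginals are
\<open>c\<close> times their clean counterparts plus the same measure \<open>q \<otimes> e\<close>. For fixed \<open>g\<close> the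
divergence estimate is linear in these two laws, and the common part \<open>q \<otimes> e\<close> contributes exactly
\<open>\<Sum>j. e j \<Delta>\<^sup>j\<close>.\<close>

lemma integral_finite_support:
  fixes N :: "'a::countable measure" and G :: "'a \<Rightarrow> real"
  assumes "finite_measure N" and sets_N: "sets N = sets (count_space UNIV)"
    and "finite S" and support: "AE z in N. z \<in> S"
  shows "integral\<^sup>L N G = (\<Sum>s\<in>S. G s * measure N {s})"
proof -
  interpret finite_measure N by fact
  have "integral\<^sup>L N G = integral\<^sup>L N (\<lambda>z. \<Sum>s\<in>S. G s * indicator {s} z)"
    using support \<open>finite S\<close> sets_N
    by (intro integral_cong_AE)
      (auto simp: indicator_def measurable_cong_sets[OF sets_N refl] elim!: eventually_mono)
  also have "\<dots> = (\<Sum>s\<in>S. integral\<^sup>L N (\<lambda>z. G s * indicator {s} z))"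
    by (rule Bochner_Integration.integral_sum)
      (auto simp: sets_N intro!: integrable_real_indicator simp flip: top.not_eq_extremum)
  also have "\<dots> = (\<Sum>s\<in>S. G s * measure N {s})"
    using sets_N sets_eq_imp_space_eq[OF sets_N] by simp
  finally show ?thesis .
qed

lemma integral_distr_finite_range:
  fixes Z :: "'w \<Rightarrow> 'a::countable" and G :: "'a \<Rightarrow> real"
  assumes "finite_measure M" and Z: "Z \<in> measurable M (count_space UNIV)"
    and "finite S" and "\<forall>\<omega>\<in>space M. Z \<omega> \<in> S"
  shows "integral\<^sup>L (distr M (count_space UNIV) Z) G
           = (\<Sum>s\<in>S. G s * measure M {\<omega>\<in>space M. Z \<omega> = s})"
proof -
  have "integral\<^sup>L (distr M (count_space UNIV) Z) G
          = (\<Sum>s\<in>S. G s * measure (distr M (count_space UNIV) Z) {s})"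
    using assms by (intro integral_finite_support finite_measure.finite_measure_distr)
      (auto simp: AE_distr_iff)
  also have "\<dots> = (\<Sum>s\<in>S. G s * measure M {\<omega>\<in>space M. Z \<omega> = s})"
    using Z by (simp add: measure_distr vimage_def Int_def conj_commute)
  finally show ?thesis .
qed

lemma integral_pair_finite_support:
  fixes N1 :: "'a::countable measure" and N2 :: "'b::countable measure"
    and G :: "'a \<Rightarrow> 'b \<Rightarrow> real"
  assumes "finite_measure N1" "finite_measure N2"
    and sets_N1: "sets N1 = sets (count_space UNIV)" and sets_N2: "sets N2 = sets (count_space UNIV)"
    and "finite S" "finite T" and "AE a in N1. a \<in> S" "AE b in N2. b \<in> T"
  shows "integral\<^sup>L (N1 \<Otimes>\<^sub>M N2) (\<lambda>(a, b). G a b)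
           = (\<Sum>a\<in>S. \<Sum>b\<in>T. G a b * (measure N1 {a} * measure N2 {b}))"
proof -
  interpret N1: finite_measure N1 by fact
  interpret N2: finite_measure N2 by fact
  interpret pair_sigma_finite N1 N2 ..
  have sets_pair: "sets (N1 \<Otimes>\<^sub>M N2) = sets (count_space UNIV)"
  proof -
    have "count_space UNIV \<Otimes>\<^sub>M count_space UNIV = (count_space UNIV :: ('a \<times> 'b) measure)"
      by (simp add: pair_measure_countable)
    then show ?thesis
      by (metis sets_pair_measure_cong[OF sets_N1 sets_N2])
  qed
  have measure_singleton: "measure (N1 \<Otimes>\<^sub>M N2) {(a, b)} = measure N1 {a} * measure N2 {b}"
    for a b
    using N2.emeasure_pair_measure_Times[of "{a}" N1 "{b}"] sets_N1 sets_N2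
    by (simp add: measure_def enn2real_mult)
  have "AE z in N1 \<Otimes>\<^sub>M N2. z \<in> S \<times> T"
    using \<open>AE a in N1. a \<in> S\<close> \<open>AE b in N2. b \<in> T\<close>
    by (intro AE_pair_measure) (auto simp: sets_pair elim!: eventually_mono)
  then have "integral\<^sup>L (N1 \<Otimes>\<^sub>M N2) (\<lambda>(a, b). G a b)
      = (\<Sum>z\<in>S \<times> T. (case z of (a, b) \<Rightarrow> G a b) * measure (N1 \<Otimes>\<^sub>M N2) {z})"
    using assms
    by (intro integral_finite_support[OF _ sets_pair]) (auto intro: finite_measure_pair_measure)
  also have "\<dots> = (\<Sum>a\<in>S. \<Sum>b\<in>T. G a b * (measure N1 {a} * measure N2 {b}))"
    unfolding sum.cartesian_product by (intro sum.cong) (auto simp: measure_singleton)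
  finally show ?thesis .
qed

lemma dfL_eq_sum:
  fixes L :: "'w \<Rightarrow> nat" and h :: "'x \<Rightarrow> nat"
  assumes "prob_space M"
    and hX: "(\<lambda>\<omega>. h (X \<omega>)) \<in> measurable M (count_space UNIV)"
    and L: "L \<in> measurable M (count_space UNIV)"
    and "finite S" "finite T"
    and hX_range: "\<forall>\<omega>\<in>space M. h (X \<omega>) \<in> S" and L_range: "\<forall>\<omega>\<in>space M. L \<omega> \<in> T"
  shows "dfL M X L h g D f
    = (\<Sum>a\<in>S. \<Sum>b\<in>T. g a b * measure M {\<omega>\<in>space M. h (X \<omega>) = a \<and> L \<omega> = b})
      - (\<Sum>a\<in>S. \<Sum>b\<in>T. fconj D f (g a b)
           * (measure M {\<omega>\<in>space M. h (X \<omega>) = a} * measure M {\<omega>\<in>space M. L \<omega> = b}))"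
proof -
  interpret prob_space M by fact
  have count_space_pair: "count_space UNIV \<Otimes>\<^sub>M count_space UNIV = (count_space UNIV :: (nat \<times> nat) measure)"
    by (simp add: pair_measure_countable)
  have "(\<lambda>\<omega>. (h (X \<omega>), L \<omega>)) \<in> measurable M (count_space UNIV)"
    using hX L by (simp add: measurable_pair_iff flip: count_space_pair)
  then have joint: "integral\<^sup>L (distr M (count_space UNIV \<Otimes>\<^sub>M count_space UNIV) (\<lambda>\<omega>. (h (X \<omega>), L \<omega>)))
      (\<lambda>(a, b). g a b)
    = (\<Sum>a\<in>S. \<Sum>b\<in>T. g a b * measure M {\<omega>\<in>space M. h (X \<omega>) = a \<and> L \<omega> = b})"
    using assms
    by (simp add: count_space_pair integral_distr_finite_range[where S = "S \<times> T"]
        sum.cartesian_product split_beta' prod_eq_iff finite_measure_axioms)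
  have product: "integral\<^sup>L (distr M (count_space UNIV) (\<lambda>\<omega>. h (X \<omega>)) \<Otimes>\<^sub>M distr M (count_space UNIV) L)
      (\<lambda>(a, b). fconj D f (g a b))
    = (\<Sum>a\<in>S. \<Sum>b\<in>T. fconj D f (g a b)
           * (measure M {\<omega>\<in>space M. h (X \<omega>) = a} * measure M {\<omega>\<in>space M. L \<omega> = b}))"
    using assms
    by (subst integral_pair_finite_support)
      (auto simp: finite_measure_distr AE_distr_iff measure_distr vimage_def Int_def conj_commute)
  show ?thesis
    unfolding dfL_def joint product ..
qed

lemma DeltaF_eq_sum:
  fixes h :: "'x \<Rightarrow> nat"
  assumes "prob_space M"
    and hX: "(\<lambda>\<omega>. h (X \<omega>)) \<in> measurable M (count_space UNIV)"
    and "finite S" and "\<forall>\<omega>\<in>space M. h (X \<omega>) \<in> S"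
  shows "DeltaF M X h g D f j
    = (\<Sum>a\<in>S. (g a j - fconj D f (g a j)) * measure M {\<omega>\<in>space M. h (X \<omega>) = a})"
proof -
  have "integral\<^sup>L M (\<lambda>\<omega>. G (h (X \<omega>))) = (\<Sum>a\<in>S. G a * measure M {\<omega>\<in>space M. h (X \<omega>) = a})"
    for G :: "nat \<Rightarrow> real"
    using assms integral_distr[OF hX, of G]
    by (simp add: integral_distr_finite_range prob_space.finite_measure)
  from this[of "\<lambda>a. g a j"] this[of "\<lambda>a. fconj D f (g a j)"] show ?thesis
    by (simp add: DeltaF_def left_diff_distrib sum_subtractf)
qed

lemma sum_mult_Tunif:
  assumes "j \<in> {1..K}"
  shows "(\<Sum>i\<in>{1..K}. p i * Tunif K e i j)
    = (1 - (\<Sum>i\<in>{1..K}. e i)) * p j + e j * (\<Sum>i\<in>{1..K}. p i)"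
proof -
  have "(\<Sum>i\<in>{1..K}. p i * Tunif K e i j)
      = p j * (1 - (\<Sum>i\<in>{1..K} - {j}. e i)) + (\<Sum>i\<in>{1..K} - {j}. p i * e j)"
    using assms by (simp add: sum.remove[of _ j] Tunif_def)
  also have "\<dots> = (1 - (\<Sum>i\<in>{1..K}. e i)) * p j + e j * (\<Sum>i\<in>{1..K}. p i)"
    using assms by (simp add: sum_diff1 sum_distrib_left algebra_simps)
  finally show ?thesis .
qed

lemma noisy_label_prob:
  fixes Y Yt :: "'w \<Rightarrow> nat"
  assumes "prob_space M"
    and X_meas: "X \<in> measurable M SX"
    and Y_meas: "Y \<in> measurable M (count_space UNIV)"
    and Yt_meas: "Yt \<in> measurable M (count_space UNIV)"
    and Y_range: "\<forall>\<omega>\<in>space M. Y \<omega> \<in> {1..K}"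
    and noise: "\<forall>A\<in>sets SX. \<forall>i\<in>{1..K}. \<forall>j\<in>{1..K}.
        measure M {\<omega>\<in>space M. X \<omega> \<in> A \<and> Y \<omega> = i \<and> Yt \<omega> = j}
          = measure M {\<omega>\<in>space M. X \<omega> \<in> A \<and> Y \<omega> = i} * Tunif K e i j"
    and A: "A \<in> sets SX" and j: "j \<in> {1..K}"
  shows "measure M {\<omega>\<in>space M. X \<omega> \<in> A \<and> Yt \<omega> = j}
    = (1 - (\<Sum>i\<in>{1..K}. e i)) * measure M {\<omega>\<in>space M. X \<omega> \<in> A \<and> Y \<omega> = j}
      + e j * measure M {\<omega>\<in>space M. X \<omega> \<in> A}"
proof -
  interpret prob_space M by fact
  note [measurable] = X_meas Y_meas Yt_meas A
  have partition: "measure M {\<omega>\<in>space M. P \<omega>}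
      = (\<Sum>i\<in>{1..K}. measure M {\<omega>\<in>space M. P \<omega> \<and> Y \<omega> = i})"
    if "Measurable.pred M P" for P
    using that Y_range by (intro prob_sum) (auto intro!: AE_I2)
  have "measure M {\<omega>\<in>space M. X \<omega> \<in> A \<and> Yt \<omega> = j}
      = (\<Sum>i\<in>{1..K}. measure M {\<omega>\<in>space M. X \<omega> \<in> A \<and> Y \<omega> = i} * Tunif K e i j)"
    using noise A j by (subst partition) (auto intro!: sum.cong simp: conj_ac)
  also have "\<dots> = (1 - (\<Sum>i\<in>{1..K}. e i)) * measure M {\<omega>\<in>space M. X \<omega> \<in> A \<and> Y \<omega> = j}
      + e j * measure M {\<omega>\<in>space M. X \<omega> \<in> A}"
    using j by (subst sum_mult_Tunif) (simp_all add: partition[of "\<lambda>\<omega>. X \<omega> \<in> A"])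
  finally show ?thesis .
qed

lemma sum_sum_mult_affine:
  fixes c :: "'c::comm_semiring_0"
  assumes "\<And>a b. a \<in> A \<Longrightarrow> b \<in> B \<Longrightarrow> r a b = c * p a b + e b * q a"
  shows "(\<Sum>a\<in>A. \<Sum>b\<in>B. G a b * r a b)
    = c * (\<Sum>a\<in>A. \<Sum>b\<in>B. G a b * p a b) + (\<Sum>b\<in>B. e b * (\<Sum>a\<in>A. G a b * q a))"
proof -
  have "(\<Sum>a\<in>A. \<Sum>b\<in>B. G a b * r a b)
      = (\<Sum>a\<in>A. \<Sum>b\<in>B. c * (G a b * p a b) + e b * (G a b * q a))"
    by (intro sum.cong) (simp_all add: assms algebra_simps)
  also have "\<dots> = c * (\<Sum>a\<in>A. \<Sum>b\<in>B. G a b * p a b) + (\<Sum>a\<in>A. \<Sum>b\<in>B. e b * (G a b * q a))"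
    by (simp add: sum.distrib sum_distrib_left)
  also have "(\<Sum>a\<in>A. \<Sum>b\<in>B. e b * (G a b * q a)) = (\<Sum>b\<in>B. e b * (\<Sum>a\<in>A. G a b * q a))"
    by (subst sum.swap) (simp add: sum_distrib_left)
  finally show ?thesis .
qed

lemma dfL_label_mixture:
  fixes Y Yt :: "'w \<Rightarrow> nat" and h :: "'x \<Rightarrow> nat" and c :: real
  assumes M: "prob_space M"
    and hX_meas: "(\<lambda>\<omega>. h (X \<omega>)) \<in> measurable M (count_space UNIV)"
    and Y_meas: "Y \<in> measurable M (count_space UNIV)"
    and Yt_meas: "Yt \<in> measurable M (count_space UNIV)"
    and "finite S" "finite T"
    and hX_range: "\<forall>\<omega>\<in>space M. h (X \<omega>) \<in> S"
    and Y_range: "\<forall>\<omega>\<in>space M. Y \<omega> \<in> T"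
    and Yt_range: "\<forall>\<omega>\<in>space M. Yt \<omega> \<in> T"
    and joint: "\<And>a b. b \<in> T \<Longrightarrow> measure M {\<omega>\<in>space M. h (X \<omega>) = a \<and> Yt \<omega> = b}
      = c * measure M {\<omega>\<in>space M. h (X \<omega>) = a \<and> Y \<omega> = b} + e b * measure M {\<omega>\<in>space M. h (X \<omega>) = a}"
    and marginal: "\<And>b. b \<in> T \<Longrightarrow> measure M {\<omega>\<in>space M. Yt \<omega> = b}
      = c * measure M {\<omega>\<in>space M. Y \<omega> = b} + e b"
  shows "dfL M X Yt h g D f = c * dfL M X Y h g D f + (\<Sum>j\<in>T. e j * DeltaF M X h g D f j)"
proof -
  define F where "F a b = fconj D f (g a b)" for a b
  define P where "P L a b = measure M {\<omega>\<in>space M. h (X \<omega>) = a \<and> L \<omega> = b}"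
    for L :: "'w \<Rightarrow> nat" and a b
  define q where "q a = measure M {\<omega>\<in>space M. h (X \<omega>) = a}" for a
  define R where "R L b = measure M {\<omega>\<in>space M. L \<omega> = b}" for L :: "'w \<Rightarrow> nat" and b
  have dfL_sum: "dfL M X L h g D f
      = (\<Sum>a\<in>S. \<Sum>b\<in>T. g a b * P L a b) - (\<Sum>a\<in>S. \<Sum>b\<in>T. F a b * (q a * R L b))"
    if "L \<in> measurable M (count_space UNIV)" "\<forall>\<omega>\<in>space M. L \<omega> \<in> T" for L
    unfolding F_def P_def q_def R_def
    using dfL_eq_sum[where X = X and h = h, OF M hX_meas that(1) assms(5,6) hX_range that(2)] .
  have joint_part: "(\<Sum>a\<in>S. \<Sum>b\<in>T. g a b * P Yt a b)
      = c * (\<Sum>a\<in>S. \<Sum>b\<in>T. g a b * P Y a b) + (\<Sum>b\<in>T. e b * (\<Sum>a\<in>S. g a b * q a))"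
    using joint by (intro sum_sum_mult_affine) (simp add: P_def q_def)
  have product_part: "(\<Sum>a\<in>S. \<Sum>b\<in>T. F a b * (q a * R Yt b))
      = c * (\<Sum>a\<in>S. \<Sum>b\<in>T. F a b * (q a * R Y b)) + (\<Sum>b\<in>T. e b * (\<Sum>a\<in>S. F a b * q a))"
    using marginal by (intro sum_sum_mult_affine) (simp add: R_def algebra_simps)
  have "(\<Sum>j\<in>T. e j * DeltaF M X h g D f j)
      = (\<Sum>b\<in>T. e b * (\<Sum>a\<in>S. g a b * q a)) - (\<Sum>b\<in>T. e b * (\<Sum>a\<in>S. F a b * q a))"
    unfolding F_def q_def
    using DeltaF_eq_sum[where X = X and h = h, OF M hX_meas assms(5) hX_range]
    by (simp add: left_diff_distrib right_diff_distrib sum_subtractf)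
  then show ?thesis
    unfolding dfL_sum[OF Yt_meas Yt_range] dfL_sum[OF Y_meas Y_range] joint_part product_part
    by (simp add: algebra_simps)
qed

theorem theorem4:
  fixes M :: "'w measure" and SX :: "'x measure"
    and X :: "'w \<Rightarrow> 'x" and Y Yt :: "'w \<Rightarrow> nat"
    and K :: nat and e :: "nat \<Rightarrow> real"
    and h :: "'x \<Rightarrow> nat" and g :: "nat \<Rightarrow> nat \<Rightarrow> real"
    and D :: "real set" and f :: "real \<Rightarrow> real"
  assumes M: "prob_space M"
    and X_meas: "X \<in> measurable M SX"
    and Y_meas: "Y \<in> measurable M (count_space UNIV)"
    and Yt_meas: "Yt \<in> measurable M (count_space UNIV)"
    and Y_range: "\<forall>\<omega>\<in>space M. Y \<omega> \<in> {1..K}"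
    and Yt_range: "\<forall>\<omega>\<in>space M. Yt \<omega> \<in> {1..K}"
    and e_nonneg: "\<forall>j\<in>{1..K}. e j \<ge> 0"
    and e_sum: "(\<Sum>j\<in>{1..K}. e j) < 1"
    and noise: "\<forall>A\<in>sets SX. \<forall>i\<in>{1..K}. \<forall>j\<in>{1..K}.
        measure M {\<omega>\<in>space M. X \<omega> \<in> A \<and> Y \<omega> = i \<and> Yt \<omega> = j}
          = measure M {\<omega>\<in>space M. X \<omega> \<in> A \<and> Y \<omega> = i} * Tunif K e i j"
    and h_meas: "h \<in> measurable SX (count_space UNIV)"
    and h_range: "\<forall>x\<in>space SX. h x \<in> {1..K}"
    and D_convex: "convex D" and one_D: "1 \<in> D"
    and f_convex: "convex_on D f" and f_one: "f 1 = 0"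
    and g_dom: "\<forall>y\<in>{1..K}. \<forall>y'\<in>{1..K}. g y y' \<in> fconj_dom D f"
  shows "dfL M X Yt h g D f
           = (1 - (\<Sum>j\<in>{1..K}. e j)) * dfL M X Y h g D f
             + (\<Sum>j\<in>{1..K}. e j * DeltaF M X h g D f j)"
proof -
  interpret prob_space M by fact
  have hX_meas: "(\<lambda>\<omega>. h (X \<omega>)) \<in> measurable M (count_space UNIV)"
    using measurable_comp[OF X_meas h_meas] by (simp add: comp_def)
  have hX_range: "\<forall>\<omega>\<in>space M. h (X \<omega>) \<in> {1..K}"
    using h_range measurable_space[OF X_meas] by auto
  have fibre_sets: "h -` {a} \<inter> space SX \<in> sets SX" for a
    using h_meas by (rule measurable_sets) simp
  note noisy = noisy_label_prob[OF M X_meas Y_meas Yt_meas Y_range noise]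
  show ?thesis
  proof (rule dfL_label_mixture[where X = X and h = h,
        OF M hX_meas Y_meas Yt_meas _ _ hX_range Y_range Yt_range])
    show "measure M {\<omega>\<in>space M. h (X \<omega>) = a \<and> Yt \<omega> = b}
        = (1 - (\<Sum>j\<in>{1..K}. e j)) * measure M {\<omega>\<in>space M. h (X \<omega>) = a \<and> Y \<omega> = b}
          + e b * measure M {\<omega>\<in>space M. h (X \<omega>) = a}" if "b \<in> {1..K}" for a b
      using noisy[OF fibre_sets that] by (simp add: measurable_space[OF X_meas] cong: conj_cong)
    show "measure M {\<omega>\<in>space M. Yt \<omega> = b}
        = (1 - (\<Sum>j\<in>{1..K}. e j)) * measure M {\<omega>\<in>space M. Y \<omega> = b} + e b" if "b \<in> {1..K}" for b
      using noisy[OF sets.top that] by (simp add: measurable_space[OF X_meas] prob_space cong: conj_cong)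
  qed simp_all
qed

end
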